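(* Given any instance and any real number $t\ge1$, let $N^*\subseteq N$ be a $t$-cohesive group and $A$ an allocation satisfying EJR-1. Then the average satisfaction of $N^*$ with respect to $A$ is strictly greater than $\frac{t-2+1/t}{2}$.
   Context: Model: There is a set of agents $N=\{1,\dots,n\}$. The resource $R$ consists of a cake $C=[0,c]$ for a real $c\ge 0$ and a set of indivisible goods $G=\{g_1,\dots,g_m\}$ for an integer $m\ge 0$, with $\max(c,m)>0$. A piece of cake is a union of finitely many disjoint closed subintervals of $C$; its length $\ell(\cdot)$ is the sum of the lengths of its intervals. A bundle $R'=(C',G')$ consists of a piece of cake $C'\subseteq C$ and a set $G'\subseteq G$; its size is $s(R')=\ell(C')+|G'|$. Each agent $i$ approves a bundle $R_i=(C_i,G_i)$, and her utility for a bundle $R'$ is $u_i(R')=\ell(C_i\cap C')+|G_i\cap G'|$. A parameter $\alpha\in(0,c+m]$ is given; an allocation is a bundle $A$ with $s(A)\le\alpha$. For a real $t>0$, $N^*\subseteq N$ is $t$-cohesive if $|N^*|\ge t n/\alpha$ and $s(\bigcap_{i\in N^*}R_i)\ge t$. EJR-1: an allocation $A$ satisfies EJR-1 if for every real $t>0$ and every $t$-cohesive group $N^*$, some $j\in N^*$ has $u_j(A)>t-1$. The average satisfaction of a group $N'\subseteq N$ with respect to $A$ is $\frac1{|N'|}\sum_{i\in N'}u_i(A)$. *)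

theory Defs
  imports "HOL-Analysis.Analysis"
begin

definition is_piece :: "real \<Rightarrow> real set \<Rightarrow> bool" where
  "is_piece c S \<longleftrightarrow> (\<exists>I :: (real \<times> real) set. finite I \<and>
      (\<forall>(a,b)\<in>I. 0 \<le> a \<and> a \<le> b \<and> b \<le> c) \<and>
      (\<forall>p\<in>I. \<forall>q\<in>I. p \<noteq> q \<longrightarrow> {fst p..snd p} \<inter> {fst q..snd q} = {}) \<and>
      S = (\<Union>(a,b)\<in>I. {a..b}))"

definition len :: "real set \<Rightarrow> real" where
  "len S = measure lborel S"

definition is_bundle :: "real \<Rightarrow> 'g set \<Rightarrow> real set \<times> 'g set \<Rightarrow> bool" where
  "is_bundle c G B \<longleftrightarrow> is_piece c (fst B) \<and> snd B \<subseteq> G"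

definition bsize :: "real set \<times> 'g set \<Rightarrow> real" where
  "bsize B = len (fst B) + real (card (snd B))"

definition util :: "real set \<times> 'g set \<Rightarrow> real set \<times> 'g set \<Rightarrow> real" where
  "util Ri B = len (fst Ri \<inter> fst B) + real (card (snd Ri \<inter> snd B))"

definition common :: "('a \<Rightarrow> real set \<times> 'g set) \<Rightarrow> 'a set \<Rightarrow> real set \<times> 'g set" where
  "common R S = ((\<Inter>i\<in>S. fst (R i)), (\<Inter>i\<in>S. snd (R i)))"

definition is_instance :: "'a set \<Rightarrow> real \<Rightarrow> 'g set \<Rightarrow> ('a \<Rightarrow> real set \<times> 'g set) \<Rightarrow> real \<Rightarrow> bool" where
  "is_instance N c G R \<alpha> \<longleftrightarrow> finite N \<and> N \<noteq> {} \<and> c \<ge> 0 \<and> finite G \<and>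
     max c (real (card G)) > 0 \<and> (\<forall>i\<in>N. is_bundle c G (R i)) \<and>
     0 < \<alpha> \<and> \<alpha> \<le> c + real (card G)"

definition is_allocation :: "real \<Rightarrow> 'g set \<Rightarrow> real \<Rightarrow> real set \<times> 'g set \<Rightarrow> bool" where
  "is_allocation c G \<alpha> A \<longleftrightarrow> is_bundle c G A \<and> bsize A \<le> \<alpha>"

definition cohesive :: "'a set \<Rightarrow> ('a \<Rightarrow> real set \<times> 'g set) \<Rightarrow> real \<Rightarrow> real \<Rightarrow> 'a set \<Rightarrow> bool" where
  "cohesive N R \<alpha> t S \<longleftrightarrow> S \<subseteq> N \<and> real (card S) \<ge> t * real (card N) / \<alpha> \<and>
     bsize (common R S) \<ge> t"

definition EJR1 :: "'a set \<Rightarrow> ('a \<Rightarrow> real set \<times> 'g set) \<Rightarrow> real \<Rightarrow> real set \<times> 'g set \<Rightarrow> bool" where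
  "EJR1 N R \<alpha> A \<longleftrightarrow> (\<forall>t>0. \<forall>S. cohesive N R \<alpha> t S \<longrightarrow> (\<exists>j\<in>S. util (R j) A > t - 1))"

definition avg_sat :: "('a \<Rightarrow> real set \<times> 'g set) \<Rightarrow> 'a set \<Rightarrow> real set \<times> 'g set \<Rightarrow> real" where
  "avg_sat R S A = (\<Sum>i\<in>S. util (R i) A) / real (card S)"

end

theory Submission
  imports Defs
begin

text \<open>Put \<open>a = t / |N*|\<close>. Every nonempty subgroup \<open>T\<close> of the \<open>t\<close>-cohesive group \<open>N*\<close> is
  \<open>|T| a\<close>-cohesive, so EJR-1 gives some member of \<open>T\<close> utility above \<open>|T| a - 1\<close>. Repeatedly
  removing such a member orders \<open>N*\<close> so that the \<open>k\<close>-th agent has utility above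
  \<open>max 0 (k a - 1)\<close>. Summing, the total utility exceeds the integral of \<open>max 0 (x a - 1)\<close> over
  \<open>[0, |N*|]\<close>, i.e. \<open>(t - 1)\<^sup>2 / (2a) = |N*| (t - 2 + 1/t) / 2\<close>.\<close>

lemma piece_closed_subset: "is_piece c P \<Longrightarrow> closed P \<and> P \<subseteq> {0..c}"
  unfolding is_piece_def by auto

lemma util_nonneg: "util Ri B \<ge> 0"
  unfolding util_def len_def by simp

lemma bsize_common_antimono:
  assumes bundles: "\<forall>i\<in>S. is_bundle c G (R i)" and "finite G"
    and "T \<subseteq> S" and "T \<noteq> {}"
  shows "bsize (common R S) \<le> bsize (common R T)"
proof -
  obtain i where i: "i \<in> T" using \<open>T \<noteq> {}\<close> by auto
  have pieces: "closed (fst (R j)) \<and> fst (R j) \<subseteq> {0..c} \<and> snd (R j) \<subseteq> G" if "j \<in> S" for j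
    using bundles that piece_closed_subset unfolding is_bundle_def by blast
  have closed_S: "closed (\<Inter>j\<in>S. fst (R j))"
    using pieces by (intro closed_INT) blast
  have "compact (\<Inter>j\<in>T. fst (R j))"
    unfolding compact_eq_bounded_closed
  proof
    show "bounded (\<Inter>j\<in>T. fst (R j))"
      using pieces i \<open>T \<subseteq> S\<close> by (meson INT_lower bounded_closed_interval bounded_subset subsetD order_trans)
    show "closed (\<Inter>j\<in>T. fst (R j))"
      using pieces \<open>T \<subseteq> S\<close> by (intro closed_INT) blast
  qed
  then have "len (\<Inter>j\<in>S. fst (R j)) \<le> len (\<Inter>j\<in>T. fst (R j))"
    unfolding len_def using \<open>T \<subseteq> S\<close> closed_S
    by (intro measure_mono_fmeasurable fmeasurable_compact) auto
  moreover have "card (\<Inter>j\<in>S. snd (R j)) \<le> card (\<Inter>j\<in>T. snd (R j))"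
  proof (rule card_mono)
    show "finite (\<Inter>j\<in>T. snd (R j))"
      using pieces i \<open>T \<subseteq> S\<close> \<open>finite G\<close> by (meson INT_lower finite_subset subsetD order_trans)
  qed (use \<open>T \<subseteq> S\<close> in auto)
  ultimately show ?thesis unfolding bsize_def common_def by simp
qed

lemma cohesive_subgroup:
  assumes inst: "is_instance N c G R \<alpha>" and coh: "cohesive N R \<alpha> t S"
    and "T \<subseteq> S" and "T \<noteq> {}" and "t > 0"
  shows "cohesive N R \<alpha> (real (card T) * t / real (card S)) T"
proof -
  have "finite S" using inst coh finite_subset unfolding is_instance_def cohesive_def by blast
  then have card_TS: "real (card T) \<le> real (card S)" and "card S > 0"
    using \<open>T \<subseteq> S\<close> \<open>T \<noteq> {}\<close> by (auto simp: card_mono)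
  have "real (card T) * t / real (card S) * real (card N) / \<alpha>
      = real (card T) * (t * real (card N) / \<alpha>) / real (card S)" by (simp add: field_simps)
  also have "\<dots> \<le> real (card T) * real (card S) / real (card S)"
    using coh by (intro divide_right_mono mult_left_mono) (auto simp: cohesive_def)
  also have "\<dots> = real (card T)" using \<open>card S > 0\<close> by simp
  finally have "real (card T) * t / real (card S) * real (card N) / \<alpha> \<le> real (card T)" .
  moreover have "real (card T) * t / real (card S) \<le> t"
    using card_TS \<open>card S > 0\<close> \<open>t > 0\<close> by (simp add: field_simps)
  moreover have "bsize (common R S) \<le> bsize (common R T)"
    using inst coh \<open>T \<subseteq> S\<close> \<open>T \<noteq> {}\<close>
    by (intro bsize_common_antimono[of S c G]) (auto simp: is_instance_def cohesive_def)
  ultimately show ?thesis using coh \<open>T \<subseteq> S\<close> unfolding cohesive_def by auto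
qed

lemma EJR1_subgroup_member:
  assumes inst: "is_instance N c G R \<alpha>" and coh: "cohesive N R \<alpha> t S" and "EJR1 N R \<alpha> A"
    and "T \<subseteq> S" "T \<noteq> {}" "t > 0"
  shows "\<exists>j\<in>T. util (R j) A > real (card T) * t / real (card S) - 1"
proof -
  have "finite S" using inst coh finite_subset unfolding is_instance_def cohesive_def by blast
  then have "card T > 0" "card S > 0"
    using \<open>T \<subseteq> S\<close> \<open>T \<noteq> {}\<close> finite_subset by (auto simp: card_gt_0_iff)
  then have "real (card T) * t / real (card S) > 0" using \<open>t > 0\<close> by simp
  then show ?thesis
    using \<open>EJR1 N R \<alpha> A\<close> cohesive_subgroup[OF inst coh \<open>T \<subseteq> S\<close> \<open>T \<noteq> {}\<close> \<open>t > 0\<close>]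
    unfolding EJR1_def by blast
qed

definition greedy_bound :: "real \<Rightarrow> real \<Rightarrow> real" where
  "greedy_bound a x = (max 0 (x * a - 1))\<^sup>2 / (2 * a)"

lemma greedy_bound_step:
  fixes a x :: real
  assumes "a > 0"
  shows "greedy_bound a x - greedy_bound a (x - 1) \<le> max 0 (x * a - 1)"
proof -
  define p where "p = x * a - 1"
  have shift: "(x - 1) * a - 1 = p - a" by (simp add: p_def algebra_simps)
  consider "p \<le> 0" | "0 < p" "p \<le> a" | "a < p" by linarith
  then have "(max 0 p)\<^sup>2 - (max 0 (p - a))\<^sup>2 \<le> 2 * a * max 0 p"
  proof cases
    case 1
    then show ?thesis using assms by simp
  next
    case 2
    then show ?thesis using assms by (simp add: power2_eq_square mult_right_mono)
  next
    case 3
    then show ?thesis using assms by (simp add: power2_eq_square algebra_simps)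
  qed
  then have "(max 0 p)\<^sup>2 / (2 * a) - (max 0 (p - a))\<^sup>2 / (2 * a) \<le> max 0 p"
    using assms by (simp add: diff_divide_distrib[symmetric] divide_le_eq mult.commute)
  then show ?thesis unfolding greedy_bound_def shift p_def .
qed

lemma real_card_Diff_singleton:
  assumes "finite S" "x \<in> S"
  shows "real (card (S - {x})) = real (card S) - 1"
proof -
  have "card S \<ge> 1" using assms by (auto simp: Suc_le_eq card_gt_0_iff)
  then show ?thesis using assms by simp
qed

lemma greedy_bound_le_sum:
  fixes u :: "'a \<Rightarrow> real"
  assumes "finite S" "a > 0" and "\<forall>i\<in>S. u i \<ge> 0"
    and "\<forall>T. T \<subseteq> S \<longrightarrow> T \<noteq> {} \<longrightarrow> (\<exists>j\<in>T. u j > real (card T) * a - 1)"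
  shows "greedy_bound a (real (card S)) \<le> sum u S"
  using assms(1,3,4)
proof (induction S rule: finite_remove_induct)
  case empty
  then show ?case by (simp add: greedy_bound_def)
next
  case (remove T)
  then obtain j where j: "j \<in> T" "u j > real (card T) * a - 1" by blast
  have "real (card (T - {j})) = real (card T) - 1"
    using remove.hyps(1) j(1) by (rule real_card_Diff_singleton)
  moreover have "greedy_bound a (real (card (T - {j}))) \<le> sum u (T - {j})"
  proof (rule remove.IH[OF j(1)])
    show "\<forall>i\<in>T - {j}. u i \<ge> 0" using remove.prems(1) by blast
    show "\<forall>T'. T' \<subseteq> T - {j} \<longrightarrow> T' \<noteq> {} \<longrightarrow> (\<exists>j\<in>T'. u j > real (card T') * a - 1)"
      using remove.prems(2) by blast
  qed
  moreover have "max 0 (real (card T) * a - 1) \<le> u j"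
    using j remove.prems(1) by auto
  moreover have "sum u T = u j + sum u (T - {j})"
    using remove.hyps(1) j(1) by (simp add: sum.remove)
  ultimately show ?case using greedy_bound_step[OF \<open>a > 0\<close>, of "real (card T)"] by auto
qed

lemma greedy_bound_less_sum:
  fixes u :: "'a \<Rightarrow> real"
  assumes "finite S" "a > 0" "real (card S) * a \<ge> 1" and nonneg: "\<forall>i\<in>S. u i \<ge> 0"
    and greedy: "\<forall>T. T \<subseteq> S \<longrightarrow> T \<noteq> {} \<longrightarrow> (\<exists>j\<in>T. u j > real (card T) * a - 1)"
  shows "greedy_bound a (real (card S)) < sum u S"
proof -
  have "S \<noteq> {}" using assms(3) by auto
  then obtain j where j: "j \<in> S" "u j > real (card S) * a - 1" using greedy by blast
  have "real (card (S - {j})) = real (card S) - 1"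
    using assms(1) j(1) by (rule real_card_Diff_singleton)
  moreover have "greedy_bound a (real (card (S - {j}))) \<le> sum u (S - {j})"
  proof (rule greedy_bound_le_sum)
    show "\<forall>i\<in>S - {j}. u i \<ge> 0" using nonneg by blast
    show "\<forall>T. T \<subseteq> S - {j} \<longrightarrow> T \<noteq> {} \<longrightarrow> (\<exists>j\<in>T. u j > real (card T) * a - 1)"
      using greedy by blast
  qed (use assms in auto)
  moreover have "sum u S = u j + sum u (S - {j})"
    using assms(1) j(1) by (simp add: sum.remove)
  ultimately show ?thesis
    using greedy_bound_step[OF \<open>a > 0\<close>, of "real (card S)"] j(2) assms(3) by auto
qed

theorem mainTheorem15:
  fixes N :: "'a set" and c :: real and G :: "'g set"
    and R :: "'a \<Rightarrow> real set \<times> 'g set" and \<alpha> t :: real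
    and S :: "'a set" and A :: "real set \<times> 'g set"
  assumes "is_instance N c G R \<alpha>"
    and "t \<ge> 1"
    and "cohesive N R \<alpha> t S"
    and "is_allocation c G \<alpha> A"
    and "EJR1 N R \<alpha> A"
  shows "avg_sat R S A > (t - 2 + 1 / t) / 2"
proof -
  define s where "s = real (card S)"
  have "finite S" "finite N" "N \<noteq> {}" "\<alpha> > 0"
    using assms(1,3) finite_subset unfolding is_instance_def cohesive_def by auto
  then have "t * real (card N) / \<alpha> > 0" using \<open>t \<ge> 1\<close> by (simp add: card_gt_0_iff)
  then have "s > 0" using assms(3) unfolding cohesive_def s_def by linarith
  have "greedy_bound (t / s) s < (\<Sum>i\<in>S. util (R i) A)"
    using EJR1_subgroup_member[OF assms(1,3,5)] \<open>finite S\<close> \<open>s > 0\<close> \<open>t \<ge> 1\<close>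
    by (intro greedy_bound_less_sum[of S "t / s", folded s_def]) (auto simp: util_nonneg s_def)
  moreover have "greedy_bound (t / s) s = s * ((t - 2 + 1 / t) / 2)"
    using \<open>s > 0\<close> \<open>t \<ge> 1\<close> by (simp add: greedy_bound_def field_simps power2_eq_square)
  ultimately show ?thesis
    using \<open>s > 0\<close> unfolding avg_sat_def s_def by (simp add: pos_less_divide_eq mult.commute)
qed

end
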